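(* Let $\mathcal{H}$ be a real Hilbert space, $A_1,A_2:\mathcal{H}\rightrightarrows\mathcal{H}$ maximally monotone, $\Gamma\subseteq\mathbb{R}_{++}$ a nonempty closed interval, $T_\gamma:=\mathrm{Id}-J_{\gamma A_1}+J_{\gamma A_2}(2J_{\gamma A_1}-\mathrm{Id})$ for $\gamma\in\Gamma$, and $\mathcal{Q}_{\delta\leftarrow\gamma}x:=\frac{\delta}{\gamma}x+\big(1-\frac{\delta}{\gamma}\big)J_{\gamma A_1}x$ for $\delta,\gamma\in\mathbb{R}_{++}$, $x\in\mathcal{H}$. Then for any nonempty bounded set $S\subseteq\bigcup_{\gamma\in\Gamma}(\operatorname{Fix}T_\gamma\times\{\gamma\})$ there exists $L\ge0$ such that $\|\mathcal{Q}_{\delta\leftarrow\gamma}x-\mathcal{Q}_{\gamma\leftarrow\gamma}x\|\le L|\delta-\gamma|$ for all $\delta\in\Gamma$ and all $(x,\gamma)\in S$.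
   Context: $J_A=(\mathrm{Id}+A)^{-1}$ is the resolvent of $A$; $\operatorname{Fix}T=\{x:Tx=x\}$. *)

theory Defs
  imports "HOL-Analysis.Analysis"
begin

definition mono_op :: "('a::real_inner \<Rightarrow> 'a set) \<Rightarrow> bool" where
  "mono_op A \<longleftrightarrow> (\<forall>x y u v. u \<in> A x \<longrightarrow> v \<in> A y \<longrightarrow> inner (x - y) (u - v) \<ge> 0)"

definition max_mono_op :: "('a::real_inner \<Rightarrow> 'a set) \<Rightarrow> bool" where
  "max_mono_op A \<longleftrightarrow> mono_op A \<and>
     (\<forall>B. mono_op B \<and> (\<forall>x. A x \<subseteq> B x) \<longrightarrow> B = A)"

definition scale_op :: "real \<Rightarrow> ('a::real_vector \<Rightarrow> 'a set) \<Rightarrow> 'a \<Rightarrow> 'a set" where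
  "scale_op g A = (\<lambda>x. scaleR g ` A x)"

text \<open>Resolvent J_A = (Id + A)^{-1}: J_A x is the (unique, for maximally monotone A)
  point p with x \<in> p + A p.\<close>
definition resolvent :: "('a::real_vector \<Rightarrow> 'a set) \<Rightarrow> 'a \<Rightarrow> 'a" where
  "resolvent A x = (THE p. x - p \<in> A p)"

definition fixpoints :: "('a \<Rightarrow> 'a) \<Rightarrow> 'a set" where
  "fixpoints T = {x. T x = x}"

definition DR_op :: "('a::real_vector \<Rightarrow> 'a set) \<Rightarrow> ('a \<Rightarrow> 'a set) \<Rightarrow> real \<Rightarrow> 'a \<Rightarrow> 'a" where
  "DR_op A1 A2 g x =
     x - resolvent (scale_op g A1) x
       + resolvent (scale_op g A2) (2 *\<^sub>R resolvent (scale_op g A1) x - x)"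

definition Q_op :: "('a::real_vector \<Rightarrow> 'a set) \<Rightarrow> real \<Rightarrow> real \<Rightarrow> 'a \<Rightarrow> 'a" where
  "Q_op A1 d g x = (d / g) *\<^sub>R x + (1 - d / g) *\<^sub>R resolvent (scale_op g A1) x"

end

theory Submission
  imports Defs
begin

(* Since Q_{delta<-gamma} x - Q_{gamma<-gamma} x = ((delta - gamma) / gamma) (x - J_{gamma A1} x),
   it suffices to bound ||x - J_{gamma A1} x|| uniformly on S.  Comparing x with the point a + gamma b,
   where b is in A1 a and J_{gamma A1} (a + gamma b) = a, nonexpansiveness of the resolvent gives
   ||x - J_{gamma A1} x|| <= 2 ||x - a|| + gamma ||b||; and gamma >= inf Gamma > 0 since Gamma is closed.
   Of the fixed-point hypothesis only gamma : Gamma is needed.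

   The resolvent is defined by a description, so its defining inclusion rests on Minty's theorem
   ran (Id + A) = H for maximally monotone A.  This is proved variationally: on H x H the function
   phi_A + ||.||^2/2, with phi_A the Fitzpatrick function of A, is strongly convex and bounded below,
   so by completeness it attains its infimum at some (x, u); maximality of A forces the infimum
   to be 0, u = -x and -x : A x. *)

lemma inner_diff_swap:
  fixes a b c d :: "'a::real_inner"
  shows "inner (a - b) (c - d) = inner (b - a) (d - c)"
  by (simp add: inner_diff_left inner_diff_right)

lemma norm_convex_combination_sq:
  fixes z w :: "'a::real_inner"
  shows "(norm ((1 - s) *\<^sub>R z + s *\<^sub>R w))\<^sup>2
       = (1 - s) * (norm z)\<^sup>2 + s * (norm w)\<^sup>2 - s * (1 - s) * (norm (z - w))\<^sup>2"
  unfolding power2_norm_eq_inner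
  by (simp add: inner_add_left inner_add_right inner_diff_left inner_diff_right inner_commute algebra_simps)

lemma norm_Pair_sq: "(norm (a, b))\<^sup>2 = (norm a)\<^sup>2 + (norm b)\<^sup>2"
  by (simp add: norm_Pair)

definition strongly_convex_epi :: "('a::real_inner \<times> real) set \<Rightarrow> bool" where
  "strongly_convex_epi E \<longleftrightarrow>
     (\<forall>z t w r s. (z, t) \<in> E \<longrightarrow> (w, r) \<in> E \<longrightarrow> 0 \<le> s \<longrightarrow> s \<le> 1 \<longrightarrow>
        ((1 - s) *\<^sub>R z + s *\<^sub>R w, (1 - s) * t + s * r - s * (1 - s) * (norm (z - w))\<^sup>2 / 2) \<in> E)"

lemma strongly_convex_epiD:
  assumes "strongly_convex_epi E" "(z, t) \<in> E" "(w, r) \<in> E" "0 \<le> s" "s \<le> 1"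
  shows "((1 - s) *\<^sub>R z + s *\<^sub>R w, (1 - s) * t + s * r - s * (1 - s) * (norm (z - w))\<^sup>2 / 2) \<in> E"
  using assms unfolding strongly_convex_epi_def by blast

lemma strongly_convex_epi_minimizing_seq_Cauchy:
  fixes E :: "('a::real_inner \<times> real) set"
  assumes conv: "strongly_convex_epi E" and lower: "\<And>z t. (z, t) \<in> E \<Longrightarrow> m \<le> t"
    and ZT: "\<And>n. (Z n, T n) \<in> E" and T_lt: "\<And>n. T n < m + 1 / Suc n"
  shows "Cauchy Z"
proof (rule CauchyI)
  fix e :: real assume "e > 0"
  have Z_close: "(norm (Z n - Z k))\<^sup>2 < 4 / Suc n + 4 / Suc k" for n k
    using lower[OF strongly_convex_epiD[OF conv ZT[of n] ZT[of k], of "1/2"]] T_lt[of n] T_lt[of k]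
    by simp
  obtain N :: nat where N: "8 / e\<^sup>2 < Suc N"
    using reals_Archimedean2 by (metis of_nat_Suc order.strict_trans2 less_imp_le lessI of_nat_le_iff)
  have "norm (Z n - Z k) < e" if "N \<le> n" "N \<le> k" for n k
  proof -
    have bounds: "4 / Suc n \<le> 4 / Suc N" "4 / Suc k \<le> 4 / Suc N"
      using that by (simp_all add: frac_le)
    have "(norm (Z n - Z k))\<^sup>2 < 4 / Suc n + 4 / Suc k" by (rule Z_close)
    also have "\<dots> \<le> 4 / Suc N + 4 / Suc N" using bounds by (rule add_mono)
    also have "\<dots> = 8 / Suc N" by simp
    also have "\<dots> < e\<^sup>2" using N \<open>e > 0\<close> by (simp add: field_simps)
    finally have sq: "(norm (Z n - Z k))\<^sup>2 < e\<^sup>2" .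
    show ?thesis by (rule power2_less_imp_less[OF sq less_imp_le[OF \<open>e > 0\<close>]])
  qed
  then show "\<exists>M. \<forall>n\<ge>M. \<forall>k\<ge>M. norm (Z n - Z k) < e" by blast
qed

lemma strongly_convex_epi_attains_Inf:
  fixes E :: "('a::{real_inner,complete_space} \<times> real) set"
  assumes conv: "strongly_convex_epi E" and "closed E" "E \<noteq> {}" and bdd: "bdd_below (snd ` E)"
  shows "\<exists>z. (z, Inf (snd ` E)) \<in> E"
proof -
  define m where "m = Inf (snd ` E)"
  have m_le: "m \<le> t" if "(z, t) \<in> E" for z t
    unfolding m_def using bdd that by (force intro: cInf_lower)
  have "\<exists>z t. (z, t) \<in> E \<and> t < m + 1 / Suc n" for n
    using cInf_lessD[of "snd ` E" "m + 1 / Suc n"] \<open>E \<noteq> {}\<close> unfolding m_def by force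
  then obtain Z T where ZT: "\<And>n. (Z n, T n) \<in> E" and T_lt: "\<And>n. T n < m + 1 / Suc n"
    by metis
  have "Cauchy Z" by (rule strongly_convex_epi_minimizing_seq_Cauchy[OF conv m_le ZT T_lt])
  then obtain z where "Z \<longlonglongrightarrow> z"
    using Cauchy_convergent_iff convergent_def by blast
  moreover have "T \<longlonglongrightarrow> m"
  proof (rule tendsto_sandwich[of "\<lambda>_. m" _ _ "\<lambda>n. m + 1 / Suc n"])
    show "\<forall>\<^sub>F n in sequentially. m \<le> T n" using m_le[OF ZT] by simp
    show "\<forall>\<^sub>F n in sequentially. T n \<le> m + 1 / Suc n" using T_lt by (simp add: less_imp_le)
    show "(\<lambda>n. m + 1 / Suc n) \<longlonglongrightarrow> m"
      using tendsto_add[OF tendsto_const LIMSEQ_inverse_real_of_nat, of m]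
      by (simp add: inverse_eq_divide)
  qed simp
  ultimately have lim: "(\<lambda>n. (Z n, T n)) \<longlonglongrightarrow> (z, m)"
    by (rule tendsto_Pair)
  have "(z, m) \<in> E"
    by (rule closed_sequentially[OF \<open>closed E\<close> _ lim]) (simp add: ZT)
  then show ?thesis unfolding m_def by blast
qed

lemma strongly_convex_epi_quadratic_growth:
  fixes E :: "('a::real_inner \<times> real) set"
  assumes conv: "strongly_convex_epi E" and min: "(z0, m) \<in> E" "\<And>w r. (w, r) \<in> E \<Longrightarrow> m \<le> r"
    and "(z, t) \<in> E"
  shows "m + (norm (z - z0))\<^sup>2 / 2 \<le> t"
proof (rule field_le_epsilon)
  fix e :: real assume "e > 0"
  define D where "D = (norm (z - z0))\<^sup>2"
  define s where "s = min 1 (e / (D + 1))"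
  have D: "D \<ge> 0" unfolding D_def by simp
  have s: "0 < s" "s \<le> 1" "s * D \<le> e"
  proof -
    show "0 < s" "s \<le> 1" using \<open>e > 0\<close> D by (auto simp: s_def)
    have "s * D \<le> e / (D + 1) * D" using D by (intro mult_right_mono) (simp_all add: s_def)
    also have "\<dots> \<le> e" using D \<open>e > 0\<close> by (simp add: field_simps)
    finally show "s * D \<le> e" .
  qed
  have "m \<le> (1 - s) * m + s * t - s * (1 - s) * D / 2"
    using min(2)[OF strongly_convex_epiD[OF conv min(1) \<open>(z, t) \<in> E\<close>, of s]] s
    by (simp add: D_def norm_minus_commute)
  then have "s * (m + (1 - s) * D / 2) \<le> s * t" by (simp add: algebra_simps)
  then have "m + (1 - s) * D / 2 \<le> t" using s by (simp add: mult_le_cancel_left_pos)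
  then have "m + D / 2 \<le> t + s * D / 2" by (simp add: algebra_simps diff_divide_distrib)
  also have "\<dots> \<le> t + e" using s(3) \<open>e > 0\<close> by simp
  finally show "m + (norm (z - z0))\<^sup>2 / 2 \<le> t + e" by (simp add: D_def)
qed

lemma mono_opD:
  assumes "mono_op A" "u \<in> A x" "v \<in> A y"
  shows "0 \<le> inner (x - y) (u - v)"
  using assms unfolding mono_op_def by blast

lemma max_mono_op_imp_mono_op: "max_mono_op A \<Longrightarrow> mono_op A"
  unfolding max_mono_op_def by blast

lemma max_mono_op_iff:
  fixes A :: "'a::real_inner \<Rightarrow> 'a set"
  shows "max_mono_op A \<longleftrightarrow> mono_op A \<and>
           (\<forall>x u. (\<forall>y v. v \<in> A y \<longrightarrow> 0 \<le> inner (x - y) (u - v)) \<longrightarrow> u \<in> A x)"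
proof
  assume max: "max_mono_op A"
  then have mono: "mono_op A" by (rule max_mono_op_imp_mono_op)
  have "u \<in> A x" if compat: "\<forall>y v. v \<in> A y \<longrightarrow> 0 \<le> inner (x - y) (u - v)" for x u
  proof -
    define B where "B = A(x := insert u (A x))"
    have B_iff: "u' \<in> B x' \<longleftrightarrow> u' \<in> A x' \<or> (x', u') = (x, u)" for x' u'
      by (auto simp: B_def)
    have "mono_op B"
      unfolding mono_op_def
    proof (intro allI impI)
      fix x1 x2 u1 u2 assume "u1 \<in> B x1" "u2 \<in> B x2"
      then consider "u1 \<in> A x1" "u2 \<in> A x2" | "u1 \<in> A x1" "x2 = x" "u2 = u"
        | "x1 = x" "u1 = u" "u2 \<in> A x2" | "x1 = x" "u1 = u" "x2 = x" "u2 = u"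
        unfolding B_iff by auto
      then show "0 \<le> inner (x1 - x2) (u1 - u2)"
      proof cases
        case 1
        then show ?thesis by (rule mono_opD[OF mono])
      next
        case 2
        then show ?thesis using compat inner_diff_swap[of x1 x u1 u] by simp
      next
        case 3
        then show ?thesis using compat by simp
      qed simp
    qed
    moreover have "\<forall>z. A z \<subseteq> B z" by (auto simp: B_iff)
    ultimately have "B = A" using max unfolding max_mono_op_def by blast
    then show "u \<in> A x" by (metis B_iff)
  qed
  with mono show "mono_op A \<and> (\<forall>x u. (\<forall>y v. v \<in> A y \<longrightarrow> 0 \<le> inner (x - y) (u - v)) \<longrightarrow> u \<in> A x)"
    by blast
next
  assume "mono_op A \<and> (\<forall>x u. (\<forall>y v. v \<in> A y \<longrightarrow> 0 \<le> inner (x - y) (u - v)) \<longrightarrow> u \<in> A x)"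
  then have mono: "mono_op A"
    and maximal: "\<And>x u. (\<And>y v. v \<in> A y \<Longrightarrow> 0 \<le> inner (x - y) (u - v)) \<Longrightarrow> u \<in> A x"
    by blast+
  have "B = A" if "mono_op B" "\<forall>z. A z \<subseteq> B z" for B
  proof -
    have "u \<in> A x" if "u \<in> B x" for x u
      using maximal mono_opD[OF \<open>mono_op B\<close> \<open>u \<in> B x\<close>] \<open>\<forall>z. A z \<subseteq> B z\<close> by blast
    with \<open>\<forall>z. A z \<subseteq> B z\<close> show "B = A" by blast
  qed
  with mono show "max_mono_op A" unfolding max_mono_op_def by blast
qed

lemma max_mono_op_maximal:
  fixes A :: "'a::real_inner \<Rightarrow> 'a set"
  assumes "max_mono_op A" and "\<And>y v. v \<in> A y \<Longrightarrow> 0 \<le> inner (x - y) (u - v)"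
  shows "u \<in> A x"
  using assms unfolding max_mono_op_iff by blast

lemma max_mono_op_affine_values:
  fixes A :: "'a::real_inner \<Rightarrow> 'a set"
  assumes "max_mono_op A" and "c > 0"
  shows "max_mono_op (\<lambda>y. (\<lambda>v. c *\<^sub>R v + w) ` A y)"
  unfolding max_mono_op_iff
proof (intro conjI allI impI)
  show "mono_op (\<lambda>y. (\<lambda>v. c *\<^sub>R v + w) ` A y)"
    unfolding mono_op_def
    using mono_opD[OF max_mono_op_imp_mono_op[OF assms(1)]] \<open>c > 0\<close>
    by (auto simp: scaleR_diff_right[symmetric])
next
  fix x u
  assume compat: "\<forall>y v'. v' \<in> (\<lambda>v. c *\<^sub>R v + w) ` A y \<longrightarrow> 0 \<le> inner (x - y) (u - v')"
  have "(1 / c) *\<^sub>R (u - w) \<in> A x"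
  proof (rule max_mono_op_maximal[OF assms(1)])
    fix y v assume "v \<in> A y"
    then have "0 \<le> inner (x - y) (u - (c *\<^sub>R v + w))" using compat by blast
    also have "u - (c *\<^sub>R v + w) = c *\<^sub>R ((1 / c) *\<^sub>R (u - w) - v)"
      using \<open>c > 0\<close> by (simp add: algebra_simps)
    finally show "0 \<le> inner (x - y) ((1 / c) *\<^sub>R (u - w) - v)"
      using \<open>c > 0\<close> by (simp add: zero_le_mult_iff)
  qed
  moreover have "u = c *\<^sub>R ((1 / c) *\<^sub>R (u - w)) + w" using \<open>c > 0\<close> by simp
  ultimately show "u \<in> (\<lambda>v. c *\<^sub>R v + w) ` A x" by blast
qed

lemma max_mono_op_scale_op:
  assumes "max_mono_op A" and "g > 0"
  shows "max_mono_op (scale_op g A)"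
  using max_mono_op_affine_values[OF assms, of 0] by (simp add: scale_op_def)

lemma max_mono_op_nonempty:
  fixes A :: "'a::real_inner \<Rightarrow> 'a set"
  assumes "max_mono_op A"
  obtains y v where "v \<in> A y"
proof (cases "\<exists>y v. v \<in> A y")
  case False
  then have "0 \<in> A 0" by (intro max_mono_op_maximal[OF assms]) auto
  then show ?thesis by (rule that)
qed (use that in blast)

(* The epigraph of phi_A + ||.||^2/2 on H x H, phi_A the Fitzpatrick function of A; working with
   the epigraph avoids the value +infinity that phi_A may take. *)
definition fitzpatrick_epi :: "('a::real_inner \<Rightarrow> 'a set) \<Rightarrow> (('a \<times> 'a) \<times> real) set" where
  "fitzpatrick_epi A =
     {(z, t). \<forall>y v. v \<in> A y \<longrightarrow> inner (fst z) v + inner y (snd z) - inner y v + (norm z)\<^sup>2 / 2 \<le> t}"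

lemma strongly_convex_fitzpatrick_epi:
  fixes A :: "'a::real_inner \<Rightarrow> 'a set"
  shows "strongly_convex_epi (fitzpatrick_epi A)"
  unfolding strongly_convex_epi_def
proof (intro allI impI)
  fix z t w r and s :: real
  assume zt: "(z, t) \<in> fitzpatrick_epi A" and wr: "(w, r) \<in> fitzpatrick_epi A" and s: "0 \<le> s" "s \<le> 1"
  define f where "f y v z = inner (fst z) v + inner y (snd z) - inner y v + (norm z)\<^sup>2 / 2" for y v :: 'a and z
  have "f y v ((1 - s) *\<^sub>R z + s *\<^sub>R w) \<le> (1 - s) * t + s * r - s * (1 - s) * (norm (z - w))\<^sup>2 / 2"
    if "v \<in> A y" for y v
  proof -
    have "f y v z \<le> t" "f y v w \<le> r"
      using zt wr that unfolding fitzpatrick_epi_def f_def by auto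
    then have "(1 - s) * f y v z + s * f y v w \<le> (1 - s) * t + s * r"
      using s by (simp add: add_mono mult_left_mono)
    moreover have "f y v ((1 - s) *\<^sub>R z + s *\<^sub>R w)
        = (1 - s) * f y v z + s * f y v w - s * (1 - s) * (norm (z - w))\<^sup>2 / 2"
      unfolding f_def norm_convex_combination_sq
      by (simp add: inner_add_left inner_add_right algebra_simps add_divide_distrib diff_divide_distrib)
    ultimately show ?thesis by linarith
  qed
  then show "((1 - s) *\<^sub>R z + s *\<^sub>R w, (1 - s) * t + s * r - s * (1 - s) * (norm (z - w))\<^sup>2 / 2)
      \<in> fitzpatrick_epi A"
    unfolding fitzpatrick_epi_def f_def by simp
qed

lemma closed_fitzpatrick_epi: "closed (fitzpatrick_epi A)"
proof -
  have "fitzpatrick_epi A = (\<Inter>(y, v) \<in> {(y, v). v \<in> A y}.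
          {p. inner (fst (fst p)) v + inner y (snd (fst p)) - inner y v + (norm (fst p))\<^sup>2 / 2 \<le> snd p})"
    unfolding fitzpatrick_epi_def by auto
  moreover have "closed {p. inner (fst (fst p)) v + inner y (snd (fst p)) - inner y v
                             + (norm (fst p))\<^sup>2 / 2 \<le> snd p}" for y v :: 'a
    by (intro closed_Collect_le continuous_intros) auto
  ultimately show ?thesis by (auto intro!: closed_INT)
qed

lemma graph_in_fitzpatrick_epi:
  assumes "mono_op A" and "v \<in> A y"
  shows "((y, v), inner y v + (norm (y, v))\<^sup>2 / 2) \<in> fitzpatrick_epi A"
proof -
  have "inner y v' + inner y' v - inner y' v' \<le> inner y v" if "v' \<in> A y'" for y' v'
    using mono_opD[OF assms(1) assms(2) that]
    by (simp add: inner_diff_left inner_diff_right inner_commute)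
  then show ?thesis unfolding fitzpatrick_epi_def by simp
qed

lemma max_mono_op_fitzpatrick_ge_inner:
  assumes "max_mono_op A"
  shows "\<exists>y v. v \<in> A y \<and> inner x u \<le> inner x v + inner y u - inner y v"
proof (rule ccontr)
  assume "\<not> ?thesis"
  then have less: "inner x v + inner y u - inner y v < inner x u" if "v \<in> A y" for y v
    using that not_le by blast
  have "u \<in> A x"
  proof (rule max_mono_op_maximal[OF assms])
    fix y v assume "v \<in> A y"
    from less[OF this] show "0 \<le> inner (x - y) (u - v)"
      by (simp add: inner_diff_left inner_diff_right inner_commute)
  qed
  from less[OF this] show False by simp
qed

lemma fitzpatrick_epi_lower_bound:
  assumes "max_mono_op A" and "((x, u), t) \<in> fitzpatrick_epi A"
  shows "(norm (x + u))\<^sup>2 / 2 \<le> t"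
proof -
  obtain y v where "v \<in> A y" "inner x u \<le> inner x v + inner y u - inner y v"
    using max_mono_op_fitzpatrick_ge_inner[OF assms(1)] by blast
  with assms(2) have "inner x u + (norm (x, u))\<^sup>2 / 2 \<le> t"
    unfolding fitzpatrick_epi_def by fastforce
  then show ?thesis using dot_norm[of x u] norm_Pair_sq[of x u] by argo
qed

lemma bdd_below_fitzpatrick_epi:
  assumes "max_mono_op A"
  shows "bdd_below (snd ` fitzpatrick_epi A)"
proof (rule bdd_belowI)
  fix t assume "t \<in> snd ` fitzpatrick_epi A"
  then obtain x u where "((x, u), t) \<in> fitzpatrick_epi A" by force
  have "0 \<le> (norm (x + u))\<^sup>2 / 2" by simp
  also have "\<dots> \<le> t" by (rule fitzpatrick_epi_lower_bound[OF assms \<open>((x, u), t) \<in> fitzpatrick_epi A\<close>])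
  finally show "0 \<le> t" .
qed

lemma max_mono_op_fitzpatrick_minimizer:
  fixes A :: "'a::{real_inner,complete_space} \<Rightarrow> 'a set"
  assumes max: "max_mono_op A"
  obtains x0 u0 m where "((x0, u0), m) \<in> fitzpatrick_epi A"
    and "\<And>y v. v \<in> A y \<Longrightarrow> m + ((norm x0)\<^sup>2 + (norm u0)\<^sup>2) / 2 \<le> inner y v + inner y x0 + inner v u0"
proof -
  have mono: "mono_op A" using max by (rule max_mono_op_imp_mono_op)
  define E where "E = fitzpatrick_epi A"
  obtain y0 v0 where "v0 \<in> A y0" using max_mono_op_nonempty[OF max] .
  then have "E \<noteq> {}" using graph_in_fitzpatrick_epi[OF mono] unfolding E_def by blast
  have "bdd_below (snd ` E)" unfolding E_def by (rule bdd_below_fitzpatrick_epi[OF max])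
  define m where "m = Inf (snd ` E)"
  have "\<exists>z. (z, m) \<in> E"
    using strongly_convex_epi_attains_Inf[OF strongly_convex_fitzpatrick_epi closed_fitzpatrick_epi]
      \<open>E \<noteq> {}\<close> \<open>bdd_below (snd ` E)\<close> unfolding E_def m_def .
  then obtain x0 u0 where z0: "((x0, u0), m) \<in> E" by auto
  have m_le: "m \<le> t" if "(z, t) \<in> E" for z t
    unfolding m_def using \<open>bdd_below (snd ` E)\<close> that by (force intro: cInf_lower)
  have growth: "m + ((norm x0)\<^sup>2 + (norm u0)\<^sup>2) / 2 \<le> inner y v + inner y x0 + inner v u0"
    if "v \<in> A y" for y v
  proof -
    have "m + (norm ((y, v) - (x0, u0)))\<^sup>2 / 2 \<le> inner y v + (norm (y, v))\<^sup>2 / 2"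
      using strongly_convex_epi_quadratic_growth[OF strongly_convex_fitzpatrick_epi]
        z0 m_le graph_in_fitzpatrick_epi[OF mono that] unfolding E_def by blast
    then show ?thesis
      using dot_norm_neg[of y x0] dot_norm_neg[of v u0] norm_Pair_sq[of y v]
        norm_Pair_sq[of "y - x0" "v - u0"]
      by simp argo
  qed
  show ?thesis by (rule that[OF z0[unfolded E_def] growth])
qed

lemma max_mono_op_zero_in_range_id_plus:
  fixes A :: "'a::{real_inner,complete_space} \<Rightarrow> 'a set"
  assumes max: "max_mono_op A"
  shows "\<exists>p. - p \<in> A p"
proof -
  obtain x0 u0 m where min: "((x0, u0), m) \<in> fitzpatrick_epi A"
    and growth: "\<And>y v. v \<in> A y \<Longrightarrow>
                   m + ((norm x0)\<^sup>2 + (norm u0)\<^sup>2) / 2 \<le> inner y v + inner y x0 + inner v u0"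
    using max_mono_op_fitzpatrick_minimizer[OF max] by blast
  have m_ge: "(norm (x0 + u0))\<^sup>2 / 2 \<le> m" by (rule fitzpatrick_epi_lower_bound[OF max min])
  obtain y v where "v \<in> A y" "inner (- u0) (- x0) \<le> inner (- u0) v + inner y (- x0) - inner y v"
    using max_mono_op_fitzpatrick_ge_inner[OF max] by blast
  then have "m + (norm (x0 + u0))\<^sup>2 / 2 \<le> 0"
    using growth[of v y] dot_norm[of x0 u0] inner_commute[of u0 x0] inner_commute[of u0 v]
    by simp argo
  with m_ge have m0: "m = 0" and "(norm (x0 + u0))\<^sup>2 = 0"
    using zero_le_power2[of "norm (x0 + u0)"] by argo+
  then have u0: "u0 = - x0" by (simp add: eq_neg_iff_add_eq_0 add.commute)
  have "- x0 \<in> A x0"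
  proof (rule max_mono_op_maximal[OF max])
    fix y v assume "v \<in> A y"
    have "inner (x0 - y) (- x0 - v) = inner y v + inner y x0 - inner v x0 - (norm x0)\<^sup>2"
      by (simp add: inner_diff_left inner_diff_right inner_commute power2_norm_eq_inner)
    with growth[OF \<open>v \<in> A y\<close>] show "0 \<le> inner (x0 - y) (- x0 - v)"
      unfolding m0 u0 by simp
  qed
  then show ?thesis by blast
qed

lemma max_mono_op_range_id_plus:
  fixes A :: "'a::{real_inner,complete_space} \<Rightarrow> 'a set"
  assumes "max_mono_op A"
  shows "\<exists>p. x - p \<in> A p"
proof -
  have "max_mono_op (\<lambda>y. (\<lambda>v. v - x) ` A y)"
    using max_mono_op_affine_values[OF assms, of 1 "- x"] by simp
  then obtain p where "- p \<in> (\<lambda>v. v - x) ` A p"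
    using max_mono_op_zero_in_range_id_plus by blast
  then obtain v where eq: "- p = v - x" and "v \<in> A p" by (rule imageE)
  have "x - p = x + (v - x)" unfolding eq[symmetric] by simp
  also have "\<dots> = v" by (simp add: algebra_simps)
  finally show ?thesis using \<open>v \<in> A p\<close> by auto
qed

lemma mono_op_inverse_id_plus_nonexpansive:
  assumes "mono_op A" and "x - p \<in> A p" and "y - q \<in> A q"
  shows "norm (p - q) \<le> norm (x - y)"
proof -
  have "0 \<le> inner (p - q) ((x - p) - (y - q))"
    using mono_opD[OF assms] .
  then have "(norm (p - q))\<^sup>2 \<le> inner (p - q) (x - y)"
    by (simp add: power2_norm_eq_inner inner_diff_right algebra_simps)
  also have "\<dots> \<le> norm (p - q) * norm (x - y)"
    by (rule norm_cauchy_schwarz)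
  finally have "norm (p - q) * norm (p - q) \<le> norm (p - q) * norm (x - y)"
    by (simp add: power2_eq_square)
  then show ?thesis
    by (cases "p = q") (simp_all add: mult_le_cancel_left_pos)
qed

lemma resolvent_mem:
  fixes A :: "'a::{real_inner,complete_space} \<Rightarrow> 'a set"
  assumes "max_mono_op A"
  shows "x - resolvent A x \<in> A (resolvent A x)"
proof -
  obtain p where p: "x - p \<in> A p" using max_mono_op_range_id_plus[OF assms] by blast
  have mono: "mono_op A" using assms by (rule max_mono_op_imp_mono_op)
  have uniq: "q = p" if "x - q \<in> A q" for q
    using mono_op_inverse_id_plus_nonexpansive[OF mono that p] by simp
  have "resolvent A x = p"
    unfolding resolvent_def by (rule the_equality[of "\<lambda>q. x - q \<in> A q", OF p uniq])
  with p show ?thesis by simp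
qed

lemma resolvent_scale_op_displacement_le:
  fixes A :: "'a::{real_inner,complete_space} \<Rightarrow> 'a set"
  assumes "max_mono_op A" and "g > 0" and "b \<in> A a"
  shows "norm (x - resolvent (scale_op g A) x) \<le> 2 * norm (x - a) + g * norm b"
proof -
  define p where "p = resolvent (scale_op g A) x"
  have max: "max_mono_op (scale_op g A)" by (rule max_mono_op_scale_op[OF assms(1,2)])
  then have mono: "mono_op (scale_op g A)" by (rule max_mono_op_imp_mono_op)
  have "g *\<^sub>R b \<in> scale_op g A a" using assms(3) unfolding scale_op_def by (rule imageI)
  then have "(a + g *\<^sub>R b) - a \<in> scale_op g A a" by simp
  then have "norm (p - a) \<le> norm (x - (a + g *\<^sub>R b))"
    unfolding p_def by (rule mono_op_inverse_id_plus_nonexpansive[OF mono resolvent_mem[OF max]])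
  also have "\<dots> \<le> norm (x - a) + g * norm b"
    using norm_triangle_ineq4[of "x - a" "g *\<^sub>R b"] \<open>g > 0\<close> by (simp add: diff_diff_eq)
  finally have "norm (p - a) \<le> norm (x - a) + g * norm b" .
  moreover have "norm (x - p) \<le> norm (x - a) + norm (p - a)"
    using norm_triangle_ineq4[of "x - a" "p - a"] by simp
  ultimately show ?thesis unfolding p_def by linarith
qed

lemma Q_op_diff:
  assumes "g \<noteq> 0"
  shows "Q_op A d g x - Q_op A g g x = ((d - g) / g) *\<^sub>R (x - resolvent (scale_op g A) x)"
  using assms unfolding Q_op_def by (simp add: algebra_simps diff_divide_distrib)

lemma norm_Q_op_diff_le:
  fixes A :: "'a::{real_inner,complete_space} \<Rightarrow> 'a set"
  assumes "max_mono_op A" and "g > 0" and "b \<in> A a"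
  shows "norm (Q_op A d g x - Q_op A g g x) \<le> \<bar>d - g\<bar> * (2 * norm (x - a) / g + norm b)"
proof -
  have "norm (Q_op A d g x - Q_op A g g x) = \<bar>d - g\<bar> / g * norm (x - resolvent (scale_op g A) x)"
    using \<open>g > 0\<close> by (simp add: Q_op_diff)
  also have "\<dots> \<le> \<bar>d - g\<bar> / g * (2 * norm (x - a) + g * norm b)"
    using resolvent_scale_op_displacement_le[OF assms] \<open>g > 0\<close> by (intro mult_left_mono) auto
  also have "\<dots> = \<bar>d - g\<bar> * (2 * norm (x - a) / g + norm b)"
    using \<open>g > 0\<close> by (simp add: field_simps)
  finally show ?thesis .
qed

lemma closed_pos_set_obtains_pos_lower_bound:
  fixes \<Gamma> :: "real set"
  assumes "\<Gamma> \<noteq> {}" and "\<Gamma> \<subseteq> {0<..}" and "closed \<Gamma>"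
  obtains m where "m > 0" and "\<And>g. g \<in> \<Gamma> \<Longrightarrow> m \<le> g"
proof
  have "bdd_below \<Gamma>" by (rule bdd_below_mono[OF _ \<open>\<Gamma> \<subseteq> {0<..}\<close>]) simp
  then have "Inf \<Gamma> \<in> \<Gamma>" using closed_contains_Inf assms(1,3) by blast
  then show "Inf \<Gamma> > 0" using \<open>\<Gamma> \<subseteq> {0<..}\<close> by auto
  show "Inf \<Gamma> \<le> g" if "g \<in> \<Gamma>" for g using \<open>bdd_below \<Gamma>\<close> that by (rule cInf_lower[rotated])
qed

theorem lemma4p1:
  fixes A1 A2 :: "'a::{real_inner, complete_space} \<Rightarrow> 'a set"
    and \<Gamma> :: "real set"
    and S :: "('a \<times> real) set"
  assumes "max_mono_op A1" and "max_mono_op A2"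
    and "\<Gamma> \<noteq> {}" and "\<Gamma> \<subseteq> {0<..}" and "closed \<Gamma>" and "is_interval \<Gamma>"
    and "S \<noteq> {}" and "bounded S"
    and "S \<subseteq> (\<Union>\<gamma>\<in>\<Gamma>. fixpoints (DR_op A1 A2 \<gamma>) \<times> {\<gamma>})"
  shows "\<exists>L\<ge>0. \<forall>\<delta>\<in>\<Gamma>. \<forall>(x, \<gamma>)\<in>S.
           norm (Q_op A1 \<delta> \<gamma> x - Q_op A1 \<gamma> \<gamma> x) \<le> L * \<bar>\<delta> - \<gamma>\<bar>"
proof -
  obtain a b where ab: "b \<in> A1 a" using max_mono_op_nonempty[OF assms(1)] .
  obtain R where "R > 0" and R: "\<And>z. z \<in> S \<Longrightarrow> norm z \<le> R"
    using \<open>bounded S\<close> bounded_pos by blast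
  obtain m where "m > 0" and m: "\<And>g. g \<in> \<Gamma> \<Longrightarrow> m \<le> g"
    using closed_pos_set_obtains_pos_lower_bound[OF \<open>\<Gamma> \<noteq> {}\<close> \<open>\<Gamma> \<subseteq> {0<..}\<close> \<open>closed \<Gamma>\<close>] by blast
  define L where "L = 2 * (R + norm a) / m + norm b"
  have "norm (Q_op A1 \<delta> \<gamma> x - Q_op A1 \<gamma> \<gamma> x) \<le> L * \<bar>\<delta> - \<gamma>\<bar>" if "(x, \<gamma>) \<in> S" for \<delta> x \<gamma>
  proof -
    have "\<gamma> \<in> \<Gamma>" using assms(9) that by auto
    then have "\<gamma> > 0" "m \<le> \<gamma>" using \<open>\<Gamma> \<subseteq> {0<..}\<close> m by auto
    have "norm (x - a) \<le> R + norm a"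
      using R[OF that] norm_fst_le[of x \<gamma>] norm_triangle_ineq4[of x a] by simp
    then have "2 * norm (x - a) / \<gamma> \<le> 2 * (R + norm a) / m"
      using \<open>m > 0\<close> \<open>m \<le> \<gamma>\<close> \<open>R > 0\<close> by (intro frac_le) simp_all
    then have "\<bar>\<delta> - \<gamma>\<bar> * (2 * norm (x - a) / \<gamma> + norm b) \<le> \<bar>\<delta> - \<gamma>\<bar> * L"
      unfolding L_def by (intro mult_left_mono) simp_all
    with norm_Q_op_diff_le[OF assms(1) \<open>\<gamma> > 0\<close> ab, of \<delta> x] show ?thesis
      by (simp add: mult.commute)
  qed
  moreover have "L \<ge> 0" unfolding L_def using \<open>R > 0\<close> \<open>m > 0\<close> by simp
  ultimately show ?thesis by blast
qed

end
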